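(* Let $0<\epsilon<1$ be fixed. Suppose that Assumption 2 holds and that at least one of Assumption 1.1 and Assumption 1.2 holds. Suppose moreover that for every $C\subseteq V$ with $|C|=r$, \[ \max_{\emptyset\ne D\subseteq C}\frac{\mathbb{E}_0[e(D)]\,h(\rho_C-1)}{|D|\log(n/|D|)}\le1-\epsilon . \] Define \[ a_n=\min_{C\subseteq V,\,|C|=r}\ \min_{D\in\mathcal E_C}\left((1-\epsilon)\frac{\mathbb{E}_C[e(D)]}{|D|}\,h\!\left(\frac{c_D}{\rho_C}-1\right)-\log\frac r{|D|}\right). \] Then $a_n\to\infty$.
   Context: Setting. For each $n$ let $V=\{1,\dots,n\}$, let $p_{ij}=p_{ji}\in[0,1]$ ($i\ne j$) be edge probabilities, let $r=r_n$ be a community size, and for every $C\subseteq V$ with $|C|=r$ let $\rho_C>1$ with $\rho_Cp_{ij}\le1$ for $i,j\in C$. All may depend on $n$, and limits are as $n\to\infty$. A random simple graph on $V$ has adjacency matrix $A$. Under $\mathbb{P}_0$ the $A_{ij}$ ($i<j$) are independent $\mathrm{Bern}(p_{ij})$. Under $\mathbb{P}_C$ they are independent with $A_{ij}\sim\mathrm{Bern}(\rho_Cp_{ij})$ for $i,j\in C$ and $\mathrm{Bern}(p_{ij})$ otherwise. $\mathbb{E}_0,\mathbb{E}_C$ are the corresponding expectations; in particular $\mathbb{E}_C[e(D)]=\rho_C\mathbb{E}_0[e(D)]$ for $D\subseteq C$. Notation. $e(D)=\sum_{i<j,\ i,j\in D}A_{ij}$. $h(x)=(x+1)\log(x+1)-x$.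 For $|D|\ge2$, $\bar p_D=\mathbb{E}_0[e(D)]/\binom{|D|}2$. With $b_n=\log\log(n/r)$, for $C$ with $|C|=r$ define \[ \mathcal E_C=\Big\{D\subseteq C:\ (\rho_C-1)^2\,\mathbb{E}_0[e(D)]>(1-\epsilon/2)\,|D|\Big(\log\frac{n|D|}{r^2}-b_n\Big)\Big\}. \] For $D\in\mathcal E_C$, $c_D\ge1$ denotes the unique number with $(1+\epsilon)\mathbb{E}_0[e(D)]h(c_D-1)=|D|\log(n/|D|)$. Under the hypotheses this number exists for all large $n$. Assumption 1.1. There exists $\delta\in(0,1/2)$ with: (i) $r=O(n^{1/2-\delta})$; (ii) there exists $0<\gamma_n=o(1)$ such that $\max_{|C|=r}\max_{D\subseteq C,\,|D|<r/(n/r)^{\gamma_n}}\frac{|D|\bar p_D}{|C|\bar p_C}\le\delta$; (iii) $\max_{|C|=r}1/\bar p_C=o(r/\log(n/r))$. Assumption 1.2. (i) $r=n^{o(1)}$; (ii) $\max_{|C|=r}\log(1/\bar p_C)=o(\log(n/r)/\log r)$. Assumption 2. $\max_{|C|=r}\max_{i,j\in C}\rho_C^2p_{ij}\to0$. *)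

theory Defs
  imports "HOL-Analysis.Analysis" "HOL-Library.Landau_Symbols"
begin

definition E0e :: "(nat \<Rightarrow> nat \<Rightarrow> real) \<Rightarrow> nat set \<Rightarrow> real" where
  "E0e q D = (\<Sum>(i,j)\<in>{(i,j). i \<in> D \<and> j \<in> D \<and> i < j}. q i j)"

definition pbar :: "(nat \<Rightarrow> nat \<Rightarrow> real) \<Rightarrow> nat set \<Rightarrow> real" where
  "pbar q D = E0e q D / real (card D choose 2)"

definition hfun :: "real \<Rightarrow> real" where
  "hfun x = (x + 1) * ln (x + 1) - x"

definition EC :: "real \<Rightarrow> (nat \<Rightarrow> nat \<Rightarrow> real) \<Rightarrow> nat \<Rightarrow> nat \<Rightarrow> real \<Rightarrow> nat set \<Rightarrow> nat set set" where
  "EC eps q n r rhoC C = {D. D \<subseteq> C \<and>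
     (rhoC - 1)^2 * E0e q D >
       (1 - eps/2) * real (card D) *
         (ln (real n * real (card D) / (real r)^2) - ln (ln (real n / real r)))}"

definition cD :: "real \<Rightarrow> (nat \<Rightarrow> nat \<Rightarrow> real) \<Rightarrow> nat \<Rightarrow> nat set \<Rightarrow> real" where
  "cD eps q n D = (THE c. c \<ge> 1 \<and>
     (1 + eps) * E0e q D * hfun (c - 1) = real (card D) * ln (real n / real (card D)))"

end

(*
  Write L = log (n/|D|), Lambda = log (n/r) and c = c_D. The hypothesis on rho_C gives
  h(rho-1) <= (1 - eps^2) h(c-1), so c > rho, and the identity
  rho h(c/rho - 1) = h(c-1) - h(rho-1) - (c - rho) log rho yields
  rho h(c/rho - 1) >= eps^4 h(c-1) / (4 (1 + log c)). Since (1+eps) E_0[e(D)] h(c-1) = |D| L,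
  the first term of a_n is at least a constant times L / (1 + log c), and membership in E_C
  bounds h(c-1) by 2 rho^2, so log c <= 2 + 2 log rho.

  Under Assumption 1.1, part (iii) applied to C itself forces rho_C close to 1, part (ii)
  excludes the subsets D with |D| < r/(n/r)^gamma from E_C, and the remaining ones have
  log (r/|D|) <= gamma Lambda = o(Lambda). Under Assumption 1.2, Assumption 2 gives
  2 log rho <= log (1/pbar_C) = o(Lambda / log r), while log (r/|D|) <= log r = o(Lambda).
  In both cases a_n grows at least like a positive multiple of Lambda, and Lambda -> infinity.
*)

theory Submission
  imports Defs
begin

section \<open>The function h\<close>

lemma hfun_has_real_derivative:
  "x > -1 \<Longrightarrow> (hfun has_real_derivative ln (x + 1)) (at x)"
  unfolding hfun_def by (auto intro!: derivative_eq_intros)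

lemma hfun_nonneg:
  fixes x :: real assumes "x > -1" shows "0 \<le> hfun x"
proof -
  have "1 - 1/(1+x) \<le> ln (1+x)"
    using ln_le_minus_one[of "1/(1+x)"] assms by (simp add: ln_div)
  then have "(1+x) * (1 - 1/(1+x)) \<le> (1+x) * ln (1+x)"
    using assms by (intro mult_left_mono) auto
  moreover have "(1+x) * (1 - 1/(1+x)) = x" using assms by (simp add: field_simps)
  ultimately show ?thesis by (simp add: hfun_def add.commute)
qed

lemma hfun_ge_quadratic:
  fixes x :: real assumes "0 \<le> x" shows "x^2 / (2 * (1 + x)) \<le> hfun x"
proof -
  define g where "g y = hfun y - y^2 / (2 * (1 + y))" for y :: real
  have "g 0 \<le> g x"
  proof (rule DERIV_nonneg_imp_nondecreasing[OF assms])
    fix y :: real assume y: "0 \<le> y" "y \<le> x"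
    have "(g has_real_derivative ln (y + 1) - (2*y * (2 * (1 + y)) - y^2 * 2) / (2 * (1 + y))^2) (at y)"
      unfolding g_def using y
      by (auto intro!: derivative_eq_intros hfun_has_real_derivative simp: power2_eq_square)
    moreover have "(2*y * (2 * (1 + y)) - y^2 * 2) / (2 * (1 + y))^2 = (y^2 + 2*y) / (2 * (1 + y)^2)"
      using mult_divide_mult_cancel_left[of 2 "y^2 + 2*y" "2 * (1 + y)^2"]
      by (simp add: algebra_simps power2_eq_square)
    moreover have "(y^2 + 2*y) / (2 * (1 + y)^2) \<le> y / (1 + y)"
      using y by (simp add: divide_simps power2_eq_square) (simp add: algebra_simps)
    moreover have "y / (1 + y) \<le> ln (y + 1)"
      using ln_le_minus_one[of "1/(1+y)"] y by (simp add: ln_div field_simps add.commute)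
    ultimately show "\<exists>d. (g has_real_derivative d) (at y) \<and> 0 \<le> d" by force
  qed
  then show ?thesis by (simp add: g_def hfun_def)
qed

lemma hfun_scaled_eq:
  fixes a b :: real assumes "0 < a" "0 < b"
  shows "a * hfun (b/a - 1) = hfun (b - 1) - hfun (a - 1) - ln a * (b - a)"
  using assms by (simp add: hfun_def ln_div field_simps)

lemma hfun_scaled_ge:
  fixes a c :: real assumes "0 < a" "a \<le> c"
  shows "(c - a)^2 / (2 * c) \<le> a * hfun (c/a - 1)"
proof -
  have "(c - a)^2 / (2 * c) = a * ((c/a - 1)^2 / (2 * (1 + (c/a - 1))))"
    using assms by (simp add: field_simps power2_eq_square)
  also have "\<dots> \<le> a * hfun (c/a - 1)"
    using hfun_ge_quadratic[of "c/a - 1"] assms by (intro mult_left_mono) (auto simp: field_simps)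
  finally show ?thesis .
qed

lemma hfun_diff_le:
  fixes a b :: real assumes "0 < a" "0 < b"
  shows "hfun (b - 1) - hfun (a - 1) \<le> ln b * (b - a)"
  using hfun_scaled_eq[OF assms(2,1)] mult_nonneg_nonneg[OF _ hfun_nonneg[of "a/b - 1"], of b] assms
  by (simp add: algebra_simps)

lemma hfun_shift_strict_mono:
  fixes a b :: real assumes "1 \<le> a" "a < b"
  shows "hfun (a - 1) < hfun (b - 1)"
proof -
  have "0 < (b - a)^2 / (2 * b)" using assms by auto
  also have "\<dots> \<le> a * hfun (b/a - 1)" using hfun_scaled_ge[of a b] assms by auto
  also have "\<dots> \<le> hfun (b - 1) - hfun (a - 1)"
    using hfun_scaled_eq[of a b] assms by simp
  finally show ?thesis by simp
qed

lemma hfun_shift_mono: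
  fixes a b :: real assumes "1 \<le> a" "a \<le> b"
  shows "hfun (a - 1) \<le> hfun (b - 1)"
  using hfun_shift_strict_mono[of a b] assms by (cases "a = b") auto

lemma hfun_shift_gt:
  fixes c :: real assumes "exp 2 < c" shows "c < hfun (c - 1)"
proof -
  have "0 < c" using assms exp_gt_zero[of 2] by linarith
  then have "2 < ln c" using assms by (metis ln_exp ln_less_cancel_iff exp_gt_zero)
  then have "c * 2 < c * ln c" using \<open>0 < c\<close> by simp
  then show ?thesis by (simp add: hfun_def)
qed

lemma hfun_shift_eq_ex1:
  fixes A Y :: real assumes "0 < A" "0 \<le> Y"
  shows "\<exists>!c. 1 \<le> c \<and> A * hfun (c - 1) = Y"
proof (rule ex_ex1I)
  define b where "b = Y/A + exp 2 + 1"
  have "0 \<le> Y/A" using assms by simp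
  then have "exp 2 < b" "1 \<le> b" by (auto simp: b_def)
  have "Y \<le> A * b" using assms by (simp add: b_def field_simps)
  also have "\<dots> \<le> A * hfun (b - 1)"
    using hfun_shift_gt[OF \<open>exp 2 < b\<close>] assms by simp
  finally have "Y \<le> A * hfun (b - 1)" .
  moreover have "continuous_on {1..b} (\<lambda>x. A * hfun (x - 1))"
    unfolding hfun_def by (intro continuous_intros) auto
  ultimately have "\<exists>c\<ge>1. c \<le> b \<and> A * hfun (c - 1) = Y"
    using IVT'[of "\<lambda>x. A * hfun (x - 1)" 1 Y b] \<open>1 \<le> b\<close> assms by (simp add: hfun_def)
  then show "\<exists>c. 1 \<le> c \<and> A * hfun (c - 1) = Y" by blast
next
  fix c c' assume c: "1 \<le> c \<and> A * hfun (c - 1) = Y" and c': "1 \<le> c' \<and> A * hfun (c' - 1) = Y"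
  show "c = c'"
  proof (rule ccontr)
    assume "c \<noteq> c'"
    then have "hfun (c - 1) \<noteq> hfun (c' - 1)"
      using hfun_shift_strict_mono[of c c'] hfun_shift_strict_mono[of c' c] c c' by linarith
    moreover have "A * hfun (c - 1) = A * hfun (c' - 1)" using c c' by simp
    ultimately show False using assms by simp
  qed
qed

lemma ln_square_le_hfun:
  fixes c :: real assumes "1 \<le> c"
  shows "c * (ln c)^2 \<le> 2 * (1 + ln c) * hfun (c - 1)"
proof -
  define u where "u = ln c"
  have c: "c = exp u" and u: "0 \<le> u" using assms by (simp_all add: u_def)
  define g where "g v = exp v * (v^2 + 2 * v - 2) + 2" for v :: real
  define f where "f v = exp v * (v^2 - 2) + 2 + 2 * v" for v :: real
  have g: "g 0 \<le> g v" if "0 \<le> v" for v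
  proof (rule DERIV_nonneg_imp_nondecreasing[OF that])
    fix y :: real assume "0 \<le> y"
    moreover have "(g has_real_derivative exp y * (y^2 + 4*y)) (at y)"
      unfolding g_def by (auto intro!: derivative_eq_intros simp: algebra_simps power2_eq_square)
    ultimately show "\<exists>d. (g has_real_derivative d) (at y) \<and> 0 \<le> d" by force
  qed
  have "f 0 \<le> f u"
  proof (rule DERIV_nonneg_imp_nondecreasing[OF u])
    fix y :: real assume "0 \<le> y"
    moreover have "(f has_real_derivative g y) (at y)"
      unfolding f_def g_def by (auto intro!: derivative_eq_intros simp: algebra_simps power2_eq_square)
    ultimately show "\<exists>d. (f has_real_derivative d) (at y) \<and> 0 \<le> d"
      using g by (force simp: g_def)
  qed
  moreover have "2 * (1 + ln c) * hfun (c - 1) - c * (ln c)^2 = f u"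
    unfolding hfun_def c f_def by (simp add: algebra_simps power2_eq_square)
  ultimately show ?thesis by (simp add: f_def)
qed

lemma hfun_scaled_ge_of_gap:
  fixes eps rho c :: real
  assumes "0 < eps" "1 < rho" "1 \<le> c"
    and gap: "hfun (rho - 1) \<le> (1 - eps^2) * hfun (c - 1)"
  shows "eps^4 * hfun (c - 1) / (4 * (1 + ln c)) \<le> rho * hfun (c/rho - 1)"
proof -
  define H where "H = hfun (c - 1)"
  have "0 < hfun (rho - 1)"
    using hfun_shift_strict_mono[of 1 rho] assms by (simp add: hfun_def)
  have "0 < H"
  proof (rule ccontr)
    assume "\<not> 0 < H"
    then show False using gap \<open>0 < hfun (rho - 1)\<close> hfun_nonneg[of "c - 1"] assms
      by (simp add: H_def)
  qed
  have "rho < c"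
  proof (rule ccontr)
    assume "\<not> rho < c"
    then have "H \<le> hfun (rho - 1)" using hfun_shift_mono[of c rho] assms by (simp add: H_def)
    moreover have "0 < eps^2 * H" using \<open>0 < H\<close> \<open>0 < eps\<close> by simp
    ultimately show False using gap by (simp add: H_def left_diff_distrib)
  qed
  then have "0 < ln c" using assms by simp
  have "eps^2 * H \<le> ln c * (c - rho)"
    using gap hfun_diff_le[of rho c] assms by (simp add: H_def algebra_simps)
  then have gap': "(eps^2 * H / ln c)^2 \<le> (c - rho)^2"
    using \<open>0 < H\<close> \<open>0 < ln c\<close> assms by (intro power_mono) (auto simp: field_simps)
  have "1 / (4 * (1 + ln c)) \<le> H / (2 * c * (ln c)^2)"
  proof -
    have "0 < 4 * (1 + ln c)" using \<open>0 < ln c\<close> by (smt (verit))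
    moreover have "0 < 2 * c * (ln c)^2" using \<open>0 < ln c\<close> assms by simp
    ultimately
    show ?thesis using ln_square_le_hfun[OF \<open>1 \<le> c\<close>]
      by (simp add: H_def divide_simps) (simp add: algebra_simps)
  qed
  then have "eps^4 * H * (1 / (4 * (1 + ln c))) \<le> eps^4 * H * (H / (2 * c * (ln c)^2))"
    using \<open>0 < H\<close> by (intro mult_left_mono) simp_all
  then have "eps^4 * H / (4 * (1 + ln c)) \<le> eps^4 * H * (H / (2 * c * (ln c)^2))" by simp
  also have "\<dots> = (eps^2 * H / ln c)^2 / (2 * c)"
    using \<open>0 < H\<close> \<open>0 < ln c\<close> assms by (simp add: power2_eq_square power4_eq_xxxx field_simps)
  also have "\<dots> \<le> (c - rho)^2 / (2 * c)"
    using gap' assms by (intro divide_right_mono) auto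
  also have "\<dots> \<le> rho * hfun (c/rho - 1)"
    using hfun_scaled_ge[of rho c] \<open>rho < c\<close> assms by simp
  finally show ?thesis by (simp add: H_def)
qed

lemma ln_le_of_hfun_le:
  fixes c rho :: real
  assumes "1 \<le> c" "1 \<le> rho" "hfun (c - 1) \<le> 2 * rho^2"
  shows "ln c \<le> 2 + 2 * ln rho"
proof (cases "c \<le> exp 2")
  case True
  then have "ln c \<le> 2" using assms(1) by (metis ln_exp ln_le_cancel_iff exp_gt_zero less_le_trans zero_less_one)
  then show ?thesis using ln_ge_zero[OF assms(2)] by linarith
next
  case False
  then have "c \<le> 2 * rho^2" using hfun_shift_gt[of c] assms(3) by simp
  then have "ln c \<le> ln 2 + 2 * ln rho"
    using assms ln_mono[of c "2 * rho^2"] by (simp add: ln_mult ln_realpow)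
  then show ?thesis using ln_2_less_1 by simp
qed

lemma hfun_rate_lower_bound:
  fixes eps rho c mu k L :: real
  assumes eps: "0 < eps" "eps < 1" and "1 < rho" "1 \<le> c" "0 < k" "0 < L"
    and c_eq: "(1 + eps) * mu * hfun (c - 1) = k * L"
    and cond: "mu * hfun (rho - 1) \<le> (1 - eps) * k * L"
    and dense: "(1 - eps/2) * k * L / 2 < (rho - 1)^2 * mu"
  shows "(1 - eps) * eps^4 / (4 * (1 + eps)) * L / (3 + 2 * ln rho)
           \<le> (1 - eps) * (rho * mu / k) * hfun (c/rho - 1)"
proof -
  define H where "H = hfun (c - 1)"
  define \<kappa> where "\<kappa> = (1 - eps) * eps^4 / (4 * (1 + eps))"
  have "0 \<le> H" using hfun_nonneg[of "c - 1"] assms by (simp add: H_def)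
  have "0 < (1 - eps/2) * k * L / 2" using eps assms by simp
  then have "0 < (rho - 1)^2 * mu" using dense by linarith
  then have "0 < mu" using \<open>1 < rho\<close> by (simp add: zero_less_mult_iff)
  have "mu * hfun (rho - 1) \<le> (1 - eps) * ((1 + eps) * mu * H)"
    using cond c_eq by (simp add: H_def mult.assoc)
  also have "\<dots> = mu * ((1 - eps^2) * H)" by (simp add: algebra_simps power2_eq_square)
  finally have gap: "hfun (rho - 1) \<le> (1 - eps^2) * H" using \<open>0 < mu\<close> by simp
  have "eps * eps \<le> eps * 1" using eps by (intro mult_left_mono) auto
  then have "1 \<le> (1 - eps/2) * (1 + eps)" by (simp add: algebra_simps)
  then have "H \<le> (1 - eps/2) * (1 + eps) * H"
    using mult_right_mono[of 1 _ H] \<open>0 \<le> H\<close> by simp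
  then have "mu * (H / 2) \<le> mu * ((1 - eps/2) * (1 + eps) * H / 2)"
    using \<open>0 < mu\<close> by (intro mult_left_mono divide_right_mono) auto
  also have "\<dots> = (1 - eps/2) * ((1 + eps) * mu * H) / 2" by (simp add: field_simps)
  also have "\<dots> = (1 - eps/2) * k * L / 2" using c_eq by (simp add: H_def mult.assoc)
  also have "\<dots> < mu * (rho - 1)^2" using dense by (simp add: mult.commute)
  finally have "H / 2 < (rho - 1)^2" using \<open>0 < mu\<close> by simp
  also have "\<dots> \<le> rho^2" using \<open>1 < rho\<close> by (intro power_mono) auto
  finally have "1 + ln c \<le> 3 + 2 * ln rho"
    using ln_le_of_hfun_le[of c rho] assms by (simp add: H_def)
  moreover have "0 < 1 + ln c" using assms ln_ge_zero[of c] by linarith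
  ultimately have "\<kappa> * L / (3 + 2 * ln rho) \<le> \<kappa> * L / (1 + ln c)"
    using eps assms by (intro divide_left_mono) (auto simp: \<kappa>_def)
  also have "\<dots> = (1 - eps) * (mu / k) * (eps^4 * H / (4 * (1 + ln c)))"
  proof -
    have L_eq: "L = (1 + eps) * mu * H / k" using c_eq \<open>0 < k\<close> by (simp add: H_def field_simps)
    have "(1 - eps) * eps^4 / (4 * A) * (A * mu * H / k) / B
        = (1 - eps) * (mu / k) * (eps^4 * H / (4 * B))" if "A \<noteq> 0" "B \<noteq> 0" for A B
      using that \<open>0 < k\<close> by (simp add: field_simps)
    moreover have "1 + eps \<noteq> 0" "1 + ln c \<noteq> 0" using eps \<open>0 < 1 + ln c\<close> by linarith+
    ultimately show ?thesis unfolding \<kappa>_def by (subst L_eq) blast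
  qed
  also have "\<dots> \<le> (1 - eps) * (mu / k) * (rho * hfun (c/rho - 1))"
    using hfun_scaled_ge_of_gap[OF \<open>0 < eps\<close> \<open>1 < rho\<close> \<open>1 \<le> c\<close> gap[unfolded H_def], folded H_def]
      eps \<open>0 < mu\<close> \<open>0 < k\<close>
    by (intro mult_left_mono) simp_all
  also have "\<dots> = (1 - eps) * (rho * mu / k) * hfun (c/rho - 1)" by simp
  finally show ?thesis by (simp only: \<kappa>_def)
qed

section \<open>Expected edge counts\<close>

lemma real_choose_two: "real (k choose 2) = real k * (real k - 1) / 2"
proof (cases k)
  case (Suc m)
  have "even (k * (k - 1))" using Suc by simp
  then show ?thesis using Suc by (simp add: choose_two real_of_nat_div of_nat_diff algebra_simps)
qed simp

lemma E0e_eq_pbar_choose: "finite D \<Longrightarrow> E0e q D = pbar q D * real (card D choose 2)"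
proof (cases "2 \<le> card D")
  case False
  assume "finite D"
  with False have "\<forall>a\<in>D. \<forall>b\<in>D. a = b" using card_le_Suc0_iff_eq[of D] by simp
  then have pairs: "{(i, j). i \<in> D \<and> j \<in> D \<and> i < j} = {}" by auto
  show ?thesis using False unfolding E0e_def pairs by (simp add: binomial_eq_0)
qed (simp add: pbar_def)

lemma card_ge_2_if_pbar_pos: "0 < pbar q C \<Longrightarrow> 2 \<le> card C"
  by (rule ccontr) (simp add: pbar_def binomial_eq_0)

lemma card_pairs_le_choose_two:
  assumes "finite D"
  shows "card {(i, j). i \<in> D \<and> j \<in> D \<and> (i::nat) < j} \<le> card D choose 2"
proof -
  let ?P = "{(i, j). i \<in> D \<and> j \<in> D \<and> (i::nat) < j}"
  have "inj_on (\<lambda>(i, j). {i, j}) ?P" by (auto simp: inj_on_def doubleton_eq_iff)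
  moreover have "(\<lambda>(i, j). {i, j}) ` ?P \<subseteq> {B. B \<subseteq> D \<and> card B = 2}" by auto
  ultimately have "card ?P \<le> card {B. B \<subseteq> D \<and> card B = 2}"
    using assms by (intro card_inj_on_le) auto
  also have "\<dots> = card D choose 2" using n_subsets[OF assms] .
  finally show ?thesis .
qed

lemma pbar_le:
  assumes "finite C" "0 \<le> B" "\<And>i j. i \<in> C \<Longrightarrow> j \<in> C \<Longrightarrow> i < j \<Longrightarrow> q i j \<le> B"
  shows "pbar q C \<le> B"
proof -
  let ?P = "{(i, j). i \<in> C \<and> j \<in> C \<and> i < j}"
  have "E0e q C \<le> (\<Sum>_\<in>?P. B)"
    unfolding E0e_def by (intro sum_mono) (use assms(3) in auto)
  also have "\<dots> = B * real (card ?P)" by simp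
  also have "\<dots> \<le> B * real (card C choose 2)"
    using card_pairs_le_choose_two[OF assms(1)] assms(2) by (intro mult_left_mono) auto
  finally show ?thesis using assms(2) by (simp add: pbar_def divide_le_eq mult.commute)
qed

lemma E0e_le_of_pbar_ratio:
  fixes q :: "nat \<Rightarrow> nat \<Rightarrow> real"
  assumes "finite C" "D \<subseteq> C" "0 < pbar q C" "0 \<le> \<delta>"
    and ratio: "real (card D) * pbar q D / (real (card C) * pbar q C) \<le> \<delta>"
  shows "E0e q D \<le> \<delta> * (real (card D) / real (card C)) * E0e q C"
proof -
  define k R pC where "k = real (card D)" and "R = real (card C)" and "pC = pbar q C"
  have "2 \<le> R" using card_ge_2_if_pbar_pos[OF assms(3)] by (simp add: R_def)
  have "k \<le> R" using card_mono[OF assms(1,2)] by (simp add: k_def R_def)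
  have "finite D" using assms(1,2) finite_subset by blast
  have kpD: "k * pbar q D \<le> \<delta> * R * pC"
    using ratio \<open>2 \<le> R\<close> assms(3) by (simp add: k_def R_def pC_def divide_le_eq mult.commute mult.left_commute)
  show ?thesis
  proof (cases "k = 0")
    case True
    then show ?thesis using \<open>finite D\<close> by (simp add: E0e_def k_def)
  next
    case False
    then have "1 \<le> k" by (simp add: k_def)
    have "E0e q D = (k * pbar q D) * ((k - 1) / 2)"
      using \<open>finite D\<close> by (simp add: E0e_eq_pbar_choose real_choose_two k_def)
    also have "\<dots> \<le> (\<delta> * R * pC) * ((k - 1) / 2)"
      using kpD \<open>1 \<le> k\<close> by (intro mult_right_mono) auto
    also have "\<dots> = (\<delta> * pC) * (k * (R - 1) / 2) - (\<delta> * pC) * ((R - k) / 2)"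
      by (simp add: field_simps)
    also have "\<dots> \<le> (\<delta> * pC) * (k * (R - 1) / 2)"
      using \<open>k \<le> R\<close> \<open>0 \<le> \<delta>\<close> assms(3) by (simp add: pC_def)
    also have "\<dots> = \<delta> * (k / R) * (pC * (R * (R - 1) / 2))"
      using \<open>2 \<le> R\<close> by (simp add: field_simps)
    also have "\<dots> = \<delta> * (k / R) * E0e q C"
      using assms(1) by (simp add: E0e_eq_pbar_choose real_choose_two R_def pC_def)
    finally show ?thesis by (simp add: k_def R_def)
  qed
qed

lemma EC_subset_nonempty:
  assumes "D \<in> EC eps q n r rhoC C" shows "D \<subseteq> C" "D \<noteq> {}"
  using assms by (auto simp: EC_def E0e_def)

lemma EC_card_bounds:
  assumes "D \<in> EC eps q n r rhoC C" "finite C" "card C = r"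
  shows "D \<subseteq> C" "1 \<le> card D" "card D \<le> r"
proof -
  show "D \<subseteq> C" using EC_subset_nonempty[OF assms(1)] by simp
  then show "card D \<le> r" using card_mono[OF assms(2)] assms(3) by simp
  have "finite D" using \<open>D \<subseteq> C\<close> assms(2) finite_subset by blast
  then show "1 \<le> card D" using EC_subset_nonempty(2)[OF assms(1)] by (simp add: Suc_le_eq card_gt_0_iff)
qed

lemma cD_eq:
  assumes "0 < eps" "0 < E0e q D" "0 \<le> real (card D) * ln (real n / real (card D))"
  shows "1 \<le> cD eps q n D"
    and "(1 + eps) * E0e q D * hfun (cD eps q n D - 1) = real (card D) * ln (real n / real (card D))"
  using theI'[OF hfun_shift_eq_ex1[of "(1 + eps) * E0e q D"]] assms
  unfolding cD_def by auto

section \<open>Bounds for a single pair of sets\<close>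

text \<open>The quantity minimised in the definition of \<open>a\<^sub>n\<close>.\<close>
definition a_term :: "real \<Rightarrow> (nat \<Rightarrow> nat \<Rightarrow> real) \<Rightarrow> nat \<Rightarrow> nat \<Rightarrow> real \<Rightarrow> nat set \<Rightarrow> real" where
  "a_term eps q n r rhoC D =
     (1 - eps) * (rhoC * E0e q D / real (card D)) * hfun (cD eps q n D / rhoC - 1)
       - ln (real r / real (card D))"

lemma a_term_lower_bound:
  fixes q :: "nat \<Rightarrow> nat \<Rightarrow> real" and n r :: nat and rhoC :: real and C D :: "nat set"
  assumes eps: "0 < eps" "eps < 1" and "1 < rhoC" "finite C" "card C = r" "r < n"
    and D: "D \<in> EC eps q n r rhoC C"
    and cond: "E0e q D * hfun (rhoC - 1) / (real (card D) * ln (real n / real (card D))) \<le> 1 - eps"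
    and half: "ln (real n / real (card D)) / 2
                 \<le> ln (real n * real (card D) / (real r)^2) - ln (ln (real n / real r))"
  shows "(1 - eps) * eps^4 / (4 * (1 + eps)) * ln (real n / real (card D)) / (3 + 2 * ln rhoC)
           - ln (real r / real (card D)) \<le> a_term eps q n r rhoC D"
proof -
  define k L mu where "k = real (card D)" and "L = ln (real n / k)" and "mu = E0e q D"
  have "1 \<le> k" "k \<le> real r"
    using EC_card_bounds[OF D \<open>finite C\<close> \<open>card C = r\<close>] by (simp_all add: k_def)
  then have "0 < L" using \<open>r < n\<close> by (simp add: L_def)
  have "(1 - eps/2) * k * (L / 2)
      \<le> (1 - eps/2) * k * (ln (real n * k / (real r)^2) - ln (ln (real n / real r)))"
    using half eps \<open>1 \<le> k\<close> by (intro mult_left_mono) (auto simp: k_def L_def)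
  also have "\<dots> < (rhoC - 1)^2 * mu" using D by (simp add: EC_def k_def mu_def)
  finally have dense: "(1 - eps/2) * k * L / 2 < (rhoC - 1)^2 * mu" by simp
  moreover have "0 < (1 - eps/2) * k * L / 2" using eps \<open>1 \<le> k\<close> \<open>0 < L\<close> by simp
  ultimately have "0 < (rhoC - 1)^2 * mu" by linarith
  then have "0 < mu" by (simp add: zero_less_mult_iff)
  have "0 \<le> k * L" using \<open>1 \<le> k\<close> \<open>0 < L\<close> by simp
  then have c: "1 \<le> cD eps q n D" "(1 + eps) * mu * hfun (cD eps q n D - 1) = k * L"
    using cD_eq[of eps q D n] eps \<open>0 < mu\<close> by (simp_all add: k_def L_def mu_def)
  have "mu * hfun (rhoC - 1) \<le> (1 - eps) * k * L"
    using cond \<open>1 \<le> k\<close> \<open>0 < L\<close> by (simp add: k_def L_def mu_def divide_le_eq mult.assoc)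
  from hfun_rate_lower_bound[OF eps \<open>1 < rhoC\<close> c(1) _ \<open>0 < L\<close> c(2) this dense] \<open>1 \<le> k\<close>
  show ?thesis by (simp add: a_term_def k_def L_def mu_def)
qed

lemma half_le_EC_threshold:
  fixes n R k :: real
  assumes "0 < k" "k \<le> R" "R < n" "ln (R/k) \<le> ln (n/R) / 8" "ln (ln (n/R)) \<le> ln (n/R) / 4"
  shows "ln (n/k) / 2 \<le> ln (n * k / R^2) - ln (ln (n/R))"
proof -
  have "ln (n * k / R^2) = ln (n/k) - 2 * ln (R/k)"
    using assms by (simp add: ln_div ln_mult ln_realpow)
  moreover have "ln (n/R) \<le> ln (n/k)"
    using assms by (simp add: frac_le)
  ultimately show ?thesis using assms by linarith
qed

lemma a_term_ge_log_ratio: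
  fixes q :: "nat \<Rightarrow> nat \<Rightarrow> real" and n r :: nat and rhoC :: real and C D :: "nat set"
  assumes eps: "0 < eps" "eps < 1" and "1 < rhoC" "finite C" "card C = r" "r < n"
    and D: "D \<in> EC eps q n r rhoC C"
    and cond: "E0e q D * hfun (rhoC - 1) / (real (card D) * ln (real n / real (card D))) \<le> 1 - eps"
    and "ln (real r / real (card D)) \<le> ln (real n / real r) / 8"
    and "ln (ln (real n / real r)) \<le> ln (real n / real r) / 4"
  shows "(1 - eps) * eps^4 / (4 * (1 + eps)) * ln (real n / real r) / (3 + 2 * ln rhoC)
           - ln (real r / real (card D)) \<le> a_term eps q n r rhoC D"
proof -
  have k: "1 \<le> real (card D)" "real (card D) \<le> real r"
    using EC_card_bounds[OF D assms(4,5)] by simp_all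
  then have "ln (real n / real r) \<le> ln (real n / real (card D))"
    using \<open>r < n\<close> by (simp add: frac_le)
  moreover have "0 < 3 + 2 * ln rhoC" using \<open>1 < rhoC\<close> ln_gt_zero[of rhoC] by linarith
  ultimately have "(1 - eps) * eps^4 / (4 * (1 + eps)) * ln (real n / real r) / (3 + 2 * ln rhoC)
      \<le> (1 - eps) * eps^4 / (4 * (1 + eps)) * ln (real n / real (card D)) / (3 + 2 * ln rhoC)"
    using eps by (intro divide_right_mono mult_left_mono) auto
  moreover have "ln (real n / real (card D)) / 2
      \<le> ln (real n * real (card D) / (real r)^2) - ln (ln (real n / real r))"
    using k assms(6,9,10) by (intro half_le_EC_threshold) auto
  ultimately show ?thesis
    using a_term_lower_bound[OF eps assms(3-6) D cond] by linarith
qed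

lemma rho_le_of_pbar_lower_bound:
  fixes q :: "nat \<Rightarrow> nat \<Rightarrow> real"
  assumes "finite C" "0 < pbar q C" "1 < rho" "0 < xi" "0 < \<Lambda>"
    and pbar_lb: "1 / pbar q C \<le> hfun xi / 4 * (real (card C) / \<Lambda>)"
    and condC: "E0e q C * hfun (rho - 1) \<le> real (card C) * \<Lambda>"
  shows "rho \<le> 1 + xi"
proof (rule ccontr)
  assume "\<not> rho \<le> 1 + xi"
  define R p \<eta> where "R = real (card C)" and "p = pbar q C" and "\<eta> = hfun xi / 4"
  have "2 \<le> R" using card_ge_2_if_pbar_pos[OF assms(2)] by (simp add: R_def)
  have "0 < \<eta>" using hfun_shift_strict_mono[of 1 "1 + xi"] assms by (simp add: \<eta>_def hfun_def)
  have "4 * \<eta> < hfun (rho - 1)"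
    using hfun_shift_strict_mono[of "1 + xi" rho] \<open>\<not> rho \<le> 1 + xi\<close> assms by (simp add: \<eta>_def)
  have "\<Lambda> \<le> \<eta> * R * p"
    using pbar_lb assms(2,5) by (simp add: R_def p_def \<eta>_def field_simps)
  have "0 < p * (R * (R - 1) / 2)" using assms(2) \<open>2 \<le> R\<close> by (simp add: p_def)
  from mult_strict_left_mono[OF \<open>4 * \<eta> < hfun (rho - 1)\<close> this]
  have "p * (R * (R - 1) / 2) * (4 * \<eta>) < p * (R * (R - 1) / 2) * hfun (rho - 1)" .
  also have "\<dots> \<le> R * \<Lambda>"
    using condC assms(1) by (simp add: E0e_eq_pbar_choose real_choose_two R_def p_def)
  also have "\<dots> \<le> 2 * (R - 1) * \<Lambda>" using \<open>2 \<le> R\<close> \<open>0 < \<Lambda>\<close> by simp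
  also have "\<dots> \<le> 2 * (R - 1) * (\<eta> * R * p)"
    using \<open>\<Lambda> \<le> \<eta> * R * p\<close> \<open>2 \<le> R\<close> by (intro mult_left_mono) auto
  also have "\<dots> = p * (R * (R - 1) / 2) * (4 * \<eta>)" by (simp add: field_simps)
  finally show False by simp
qed

lemma sparse_subset_not_in_EC:
  fixes q :: "nat \<Rightarrow> nat \<Rightarrow> real" and n r :: nat
  assumes eps: "0 < eps" "eps < 1" and "1 < rho" "0 \<le> \<delta>" "finite C" "card C = r" "r < n"
    and "0 < pbar q C" "D \<subseteq> C"
    and ratio: "real (card D) * pbar q D / (real (card C) * pbar q C) \<le> \<delta>"
    and condC: "E0e q C * hfun (rho - 1) \<le> (1 - eps) * real r * ln (real n / real r)"
    and threshold: "2 * \<delta> * rho * ln (real n / real r)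
                      \<le> ln (real n * real (card D) / (real r)^2) - ln (ln (real n / real r))"
  shows "D \<notin> EC eps q n r rho C"
proof
  assume D: "D \<in> EC eps q n r rho C"
  define k R \<Lambda> E where "k = real (card D)" and "R = real r" and "\<Lambda> = ln (real n / real r)"
    and "E = ln (real n * real (card D) / (real r)^2) - ln (ln (real n / real r))"
  have "2 \<le> R" using card_ge_2_if_pbar_pos[OF \<open>0 < pbar q C\<close>] \<open>card C = r\<close> by (simp add: R_def)
  then have "0 < \<Lambda>" using \<open>r < n\<close> by (simp add: \<Lambda>_def R_def)
  have "0 \<le> k" by (simp add: k_def)
  have "0 \<le> E0e q C"
    using \<open>finite C\<close> \<open>0 < pbar q C\<close> by (simp add: E0e_eq_pbar_choose)
  have "(rho - 1)^2 \<le> 2 * rho * hfun (rho - 1)"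
    using hfun_scaled_ge[of 1 rho] \<open>1 < rho\<close> by (simp add: field_simps)
  from mult_right_mono[OF this \<open>0 \<le> E0e q C\<close>]
  have "(rho - 1)^2 * E0e q C \<le> 2 * rho * (E0e q C * hfun (rho - 1))" by (simp add: ac_simps)
  also have "\<dots> \<le> 2 * rho * ((1 - eps) * R * \<Lambda>)"
    using condC \<open>1 < rho\<close> by (simp add: R_def \<Lambda>_def)
  finally have dense_C: "(rho - 1)^2 * E0e q C \<le> 2 * rho * (1 - eps) * R * \<Lambda>" by simp
  have "(rho - 1)^2 * E0e q D \<le> (rho - 1)^2 * (\<delta> * (k / R) * E0e q C)"
    using E0e_le_of_pbar_ratio[OF \<open>finite C\<close> \<open>D \<subseteq> C\<close> \<open>0 < pbar q C\<close> \<open>0 \<le> \<delta>\<close> ratio] \<open>card C = r\<close>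
    by (intro mult_left_mono) (auto simp: k_def R_def)
  also have "\<dots> = \<delta> * (k / R) * ((rho - 1)^2 * E0e q C)" by simp
  also have "\<dots> \<le> \<delta> * (k / R) * (2 * rho * (1 - eps) * R * \<Lambda>)"
    using dense_C \<open>0 \<le> \<delta>\<close> \<open>0 \<le> k\<close> \<open>2 \<le> R\<close> by (intro mult_left_mono) auto
  also have "\<dots> = (1 - eps) * k * (2 * \<delta> * rho * \<Lambda>)" using \<open>2 \<le> R\<close> by (simp add: field_simps)
  also have "\<dots> \<le> (1 - eps/2) * k * (2 * \<delta> * rho * \<Lambda>)"
    using eps \<open>0 \<le> k\<close> \<open>0 \<le> \<delta>\<close> \<open>1 < rho\<close> \<open>0 < \<Lambda>\<close> by (intro mult_right_mono) auto
  also have "\<dots> \<le> (1 - eps/2) * k * E"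
    using threshold eps \<open>0 \<le> k\<close> by (intro mult_left_mono) (auto simp: E_def \<Lambda>_def)
  finally show False using D by (simp add: EC_def k_def E_def R_def)
qed

lemma ln_div_le_of_div_powr_le:
  fixes R k x \<gamma> :: real
  assumes "0 < R" "0 < k" "0 < x" "R / x powr \<gamma> \<le> k"
  shows "ln (R / k) \<le> \<gamma> * ln x"
proof -
  have "R \<le> k * x powr \<gamma>" using assms by (simp add: divide_le_eq)
  then have "R / k \<le> x powr \<gamma>" using assms by (simp add: divide_le_eq mult.commute)
  then have "ln (R / k) \<le> ln (x powr \<gamma>)" using assms by (intro ln_mono) auto
  then show ?thesis using assms by simp
qed

lemma less_of_ln_div_pos:
  fixes n r :: nat assumes "0 < ln (real n / real r)" "0 < r" shows "r < n"
proof (rule ccontr)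
  assume "\<not> r < n"
  then have "real n / real r \<le> 1" using assms(2) by (simp add: divide_le_eq)
  then show False using assms by (cases "n = 0") auto
qed

lemma le_tradeoff_bound:
  fixes \<kappa> \<eta> \<Lambda> s M :: real
  assumes "0 < \<kappa>" "0 < \<eta>" "0 < s" "s \<le> \<kappa> * \<Lambda> / 12" "M \<le> \<kappa> * \<Lambda> / 12"
    and "M \<le> (\<kappa> / (2 * \<eta>) - 1) * s"
  shows "M \<le> \<kappa> * \<Lambda> / (3 + \<eta> * \<Lambda> / s) - s"
proof -
  have "0 < \<kappa> * \<Lambda>" using assms by linarith
  then have "0 < \<Lambda>" using \<open>0 < \<kappa>\<close> by (simp add: zero_less_mult_iff)
  define X where "X = \<eta> * \<Lambda> / s"
  have "0 < X" using assms \<open>0 < \<Lambda>\<close> by (simp add: X_def)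
  show ?thesis
  proof (cases "X \<le> 3")
    case True
    then have "\<kappa> * \<Lambda> / 6 \<le> \<kappa> * \<Lambda> / (3 + X)"
      using assms \<open>0 < X\<close> \<open>0 < \<Lambda>\<close> by (intro divide_left_mono) auto
    then show ?thesis using assms by (simp add: X_def)
  next
    case False
    then have "\<kappa> * \<Lambda> / (2 * X) \<le> \<kappa> * \<Lambda> / (3 + X)"
      using assms \<open>0 < \<Lambda>\<close> by (intro divide_left_mono) auto
    moreover have "\<kappa> * \<Lambda> / (2 * X) = \<kappa> / (2 * \<eta>) * s"
      using assms \<open>0 < \<Lambda>\<close> by (simp add: X_def field_simps)
    ultimately show ?thesis using assms by (simp add: X_def algebra_simps)
  qed
qed

lemma a_term_ge_poly_size_instance:
  fixes q :: "nat \<Rightarrow> nat \<Rightarrow> real" and n r :: nat and C D :: "nat set"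
    and eps rhoC \<delta> \<theta> K1 \<gamma> M :: real
  defines "\<Lambda> \<equiv> ln (real n / real r)" and "\<kappa> \<equiv> (1 - eps) * eps^4 / (4 * (1 + eps))"
  assumes eps: "0 < eps" "eps < 1" and "1 < rhoC" "0 < \<delta>"
    and \<theta>: "0 < \<theta>" "\<theta> \<le> 1" "1 - \<theta> = 2 * \<delta> * (1 + \<theta>)"
    and C: "finite C" "card C = r" and D: "D \<in> EC eps q n r rhoC C"
    and \<Lambda>: "1 \<le> \<Lambda>" "ln \<Lambda> \<le> \<Lambda> / 4" "M \<le> \<kappa> * \<Lambda> / 10" "K1 + ln \<Lambda> \<le> \<delta> * \<theta> * \<Lambda>"
    and log_size: "ln (real r) \<le> \<theta> * \<Lambda> + K1"
    and \<gamma>: "\<gamma> \<le> 1/8" "\<gamma> \<le> \<kappa> / 10"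
    and pbar_C: "0 < pbar q C" "1 / pbar q C \<le> hfun (\<theta>/2) / 4 * (real r / \<Lambda>)"
    and ratio: "real (card D) < real r / (real n / real r) powr \<gamma>
                  \<Longrightarrow> real (card D) * pbar q D / (real (card C) * pbar q C) \<le> \<delta>"
    and cond: "\<And>D'. D' \<subseteq> C \<Longrightarrow> D' \<noteq> {} \<Longrightarrow>
                 E0e q D' * hfun (rhoC - 1) / (real (card D') * ln (real n / real (card D'))) \<le> 1 - eps"
  shows "M \<le> a_term eps q n r rhoC D"
proof -
  define R k where "R = real r" and "k = real (card D)"
  have "2 \<le> r" using card_ge_2_if_pbar_pos[OF pbar_C(1)] C(2) by simp
  then have "r < n" using less_of_ln_div_pos[of n r] \<Lambda>(1) by (simp add: \<Lambda>_def)
  have "D \<subseteq> C" "1 \<le> k" "k \<le> R" using EC_card_bounds[OF D C] by (auto simp: k_def R_def)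
  have "C \<noteq> {}" using \<open>2 \<le> r\<close> C(2) by auto
  from cond[OF order_refl this]
  have condC: "E0e q C * hfun (rhoC - 1) \<le> (1 - eps) * R * \<Lambda>"
    using \<Lambda>(1) \<open>2 \<le> r\<close> by (simp add: C(2) R_def \<Lambda>_def divide_le_eq mult.assoc)
  also have "\<dots> \<le> real (card C) * \<Lambda>"
    using mult_right_mono[of "1 - eps" 1 "R * \<Lambda>"] eps \<Lambda>(1) by (simp add: C(2) R_def mult.assoc)
  finally have "rhoC \<le> 1 + \<theta>/2"
    using pbar_C \<theta> \<Lambda>(1) by (intro rho_le_of_pbar_lower_bound[OF C(1) pbar_C(1) \<open>1 < rhoC\<close>])
      (simp_all add: C(2))
  show ?thesis
  proof (cases "k < R / (real n / R) powr \<gamma>")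
    case True
    have "2 * \<delta> * rhoC * \<Lambda> \<le> 2 * \<delta> * (1 + \<theta>/2) * \<Lambda>"
      using \<open>rhoC \<le> 1 + \<theta>/2\<close> \<open>0 < \<delta>\<close> \<Lambda>(1) by (intro mult_right_mono mult_left_mono) auto
    also have "\<dots> = (1 - \<theta>) * \<Lambda> - \<delta> * \<theta> * \<Lambda>" by (subst \<theta>(3)) (simp add: algebra_simps)
    also have "\<dots> \<le> \<Lambda> - ln R - ln \<Lambda>" using log_size \<Lambda>(4) by (simp add: R_def algebra_simps)
    also have "\<dots> \<le> ln (real n * k / R^2) - ln \<Lambda>"
      using \<open>1 \<le> k\<close> \<open>2 \<le> r\<close> \<open>r < n\<close> by (simp add: \<Lambda>_def R_def ln_div ln_mult ln_realpow)
    finally have "D \<notin> EC eps q n r rhoC C"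
      using ratio True \<open>0 < \<delta>\<close> condC
      by (intro sparse_subset_not_in_EC[OF eps \<open>1 < rhoC\<close> _ C \<open>r < n\<close> pbar_C(1) \<open>D \<subseteq> C\<close>])
        (simp_all add: k_def R_def \<Lambda>_def)
    then show ?thesis using D by contradiction
  next
    case False
    then have "ln (R / k) \<le> \<gamma> * \<Lambda>"
      using ln_div_le_of_div_powr_le[of R k "real n / R" \<gamma>] \<open>1 \<le> k\<close> \<open>2 \<le> r\<close> \<open>r < n\<close>
      by (simp add: R_def \<Lambda>_def not_less)
    moreover have "\<gamma> * \<Lambda> \<le> 1/8 * \<Lambda>" "\<gamma> * \<Lambda> \<le> \<kappa>/10 * \<Lambda>"
      using \<gamma> \<Lambda>(1) by (intro mult_right_mono; simp)+
    ultimately have "ln (R / k) \<le> \<Lambda> / 8" and lnRk: "ln (R / k) \<le> \<kappa> * \<Lambda> / 10" by simp_all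
    then have "\<kappa> * \<Lambda> / (3 + 2 * ln rhoC) - ln (R / k) \<le> a_term eps q n r rhoC D"
      using a_term_ge_log_ratio[OF eps \<open>1 < rhoC\<close> C \<open>r < n\<close> D
          cond[OF \<open>D \<subseteq> C\<close> EC_subset_nonempty(2)[OF D]]] \<Lambda>(2)
      by (simp add: \<kappa>_def R_def \<Lambda>_def k_def)
    moreover have "\<kappa> * \<Lambda> / 5 \<le> \<kappa> * \<Lambda> / (3 + 2 * ln rhoC)"
    proof (rule divide_left_mono)
      have "ln rhoC \<le> ln 2" using \<open>rhoC \<le> 1 + \<theta>/2\<close> \<theta> \<open>1 < rhoC\<close> by simp
      then show "3 + 2 * ln rhoC \<le> 5" using ln_2_less_1 by linarith
      show "0 \<le> \<kappa> * \<Lambda>" using eps \<Lambda>(1) by (simp add: \<kappa>_def)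
      show "0 < 5 * (3 + 2 * ln rhoC)"
        using ln_gt_zero[OF \<open>1 < rhoC\<close>] by (intro mult_pos_pos add_pos_pos) auto
    qed
    ultimately show ?thesis using \<Lambda>(3) lnRk by linarith
  qed
qed

lemma a_term_ge_subpoly_size_instance:
  fixes q :: "nat \<Rightarrow> nat \<Rightarrow> real" and n r :: nat and C D :: "nat set" and eps rhoC \<eta> M :: real
  defines "\<Lambda> \<equiv> ln (real n / real r)" and "s \<equiv> ln (real r)"
    and "\<kappa> \<equiv> (1 - eps) * eps^4 / (4 * (1 + eps))"
  assumes eps: "0 < eps" "eps < 1" and "1 < rhoC"
    and C: "finite C" "card C = r" and D: "D \<in> EC eps q n r rhoC C"
    and \<Lambda>: "1 \<le> \<Lambda>" "ln \<Lambda> \<le> \<Lambda> / 4" "M \<le> \<kappa> * \<Lambda> / 12"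
    and log_size: "s \<le> \<Lambda> / 8" "s \<le> \<kappa> * \<Lambda> / 12"
    and \<eta>: "0 < \<eta>" "2 * \<eta> \<le> \<kappa>" "M \<le> (\<kappa> / (2 * \<eta>) - 1) * ln 2"
    and pbar_C: "0 < pbar q C" "ln (1 / pbar q C) \<le> \<eta> * (\<Lambda> / s)"
    and edges: "\<And>i j. i \<in> C \<Longrightarrow> j \<in> C \<Longrightarrow> i \<noteq> j \<Longrightarrow> rhoC^2 * q i j \<le> 1"
    and cond: "E0e q D * hfun (rhoC - 1) / (real (card D) * ln (real n / real (card D))) \<le> 1 - eps"
  shows "M \<le> a_term eps q n r rhoC D"
proof -
  define R k where "R = real r" and "k = real (card D)"
  have "2 \<le> r" using card_ge_2_if_pbar_pos[OF pbar_C(1)] C(2) by simp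
  then have "r < n" using less_of_ln_div_pos[of n r] \<Lambda>(1) by (simp add: \<Lambda>_def)
  have "ln 2 \<le> s" using \<open>2 \<le> r\<close> by (simp add: s_def)
  then have "0 < s" using ln_gt_zero[of 2] by linarith
  have "1 \<le> k" "k \<le> R" using EC_card_bounds[OF D C] by (auto simp: k_def R_def)
  then have "ln (R / k) \<le> s" using \<open>2 \<le> r\<close> by (simp add: s_def R_def ln_div)
  have "pbar q C \<le> 1 / rhoC^2"
  proof (rule pbar_le[OF C(1)])
    fix i j assume "i \<in> C" "j \<in> C" "i < j"
    then have "rhoC^2 * q i j \<le> 1" using edges by simp
    then show "q i j \<le> 1 / rhoC^2" using \<open>1 < rhoC\<close> by (simp add: field_simps)
  qed simp
  then have "rhoC^2 \<le> 1 / pbar q C" using pbar_C(1) \<open>1 < rhoC\<close> by (simp add: field_simps)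
  then have "2 * ln rhoC \<le> \<eta> * \<Lambda> / s"
    using pbar_C \<open>1 < rhoC\<close> ln_mono[of "rhoC^2" "1 / pbar q C"] by (simp add: ln_realpow)
  have "\<kappa> * \<Lambda> / (3 + 2 * ln rhoC) - ln (R / k) \<le> a_term eps q n r rhoC D"
    using a_term_ge_log_ratio[OF eps \<open>1 < rhoC\<close> C \<open>r < n\<close> D cond] \<Lambda>(2) log_size(1) \<open>ln (R / k) \<le> s\<close>
    by (simp add: \<kappa>_def R_def \<Lambda>_def k_def)
  moreover have "\<kappa> * \<Lambda> / (3 + \<eta> * \<Lambda> / s) \<le> \<kappa> * \<Lambda> / (3 + 2 * ln rhoC)"
    using \<open>2 * ln rhoC \<le> \<eta> * \<Lambda> / s\<close> ln_gt_zero[OF \<open>1 < rhoC\<close>] eps \<Lambda>(1)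
    by (intro divide_left_mono mult_pos_pos add_pos_pos) (auto simp: \<kappa>_def)
  moreover have "(\<kappa> / (2 * \<eta>) - 1) * ln 2 \<le> (\<kappa> / (2 * \<eta>) - 1) * s"
    using \<eta> \<open>ln 2 \<le> s\<close> by (intro mult_left_mono) (auto simp: field_simps)
  then have "M \<le> \<kappa> * \<Lambda> / (3 + \<eta> * \<Lambda> / s) - s"
    using eps \<eta> \<open>0 < s\<close> log_size(2) \<Lambda>(3) by (intro le_tradeoff_bound) (auto simp: \<kappa>_def)
  ultimately show ?thesis using \<open>ln (R / k) \<le> s\<close> by linarith
qed

section \<open>Asymptotics\<close>

lemma eventually_ln_add_le_linear:
  fixes w c :: real assumes "0 < w"
  shows "eventually (\<lambda>x. c + ln x \<le> w * x) at_top"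
proof -
  have "eventually (\<lambda>x. ln x / x < w/2) at_top"
    using ln_x_over_x_tendsto_0 by (rule order_tendstoD) (use assms in simp)
  moreover have "eventually (\<lambda>x. max 1 (2 * c / w) \<le> x) at_top" by (rule eventually_ge_at_top)
  ultimately show ?thesis
  proof eventually_elim
    case (elim x)
    then have "ln x < w * x / 2" "2 * c \<le> w * x"
      using assms by (auto simp: divide_less_eq divide_le_eq mult.commute)
    then show ?case by linarith
  qed
qed

lemma eventually_ge_ln_nat: "eventually (\<lambda>n::nat. X \<le> ln (real n)) sequentially"
  using filterlim_compose[OF ln_at_top filterlim_real_sequentially]
  by (simp add: filterlim_at_top)

lemma log_ratio_bounds_of_powr_bound:
  fixes r :: "nat \<Rightarrow> nat" and K \<sigma> \<Lambda>0 :: real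
  assumes "0 < K" "\<sigma> < 1"
    and bound: "eventually (\<lambda>n. real (r n) \<le> K * real n powr \<sigma>) sequentially"
  shows "eventually (\<lambda>n. 1 \<le> r n \<longrightarrow>
           ln (real (r n)) \<le> \<sigma> / (1 - \<sigma>) * ln (real n / real (r n)) + ln K / (1 - \<sigma>)) sequentially"
    and "eventually (\<lambda>n. 1 \<le> r n \<longrightarrow> \<Lambda>0 \<le> ln (real n / real (r n))) sequentially"
proof -
  have ln_r: "eventually (\<lambda>n. 0 < n \<and> (1 \<le> r n \<longrightarrow> ln (real (r n)) \<le> ln K + \<sigma> * ln (real n))) sequentially"
    using bound eventually_gt_at_top[of 0]
  proof eventually_elim
    case (elim n)
    have "ln (real (r n)) \<le> ln K + \<sigma> * ln (real n)" if "1 \<le> r n"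
    proof -
      have "ln (real (r n)) \<le> ln (K * real n powr \<sigma>)" using elim assms that by simp
      then show ?thesis using elim assms by (simp add: ln_mult ln_powr)
    qed
    then show ?case using elim by simp
  qed
  then show "eventually (\<lambda>n. 1 \<le> r n \<longrightarrow>
           ln (real (r n)) \<le> \<sigma> / (1 - \<sigma>) * ln (real n / real (r n)) + ln K / (1 - \<sigma>)) sequentially"
  proof eventually_elim
    case (elim n)
    show ?case
    proof
      assume "1 \<le> r n"
      then have "(1 - \<sigma>) * ln (real (r n)) \<le> \<sigma> * ln (real n / real (r n)) + ln K"
        using elim by (simp add: ln_div algebra_simps)
      then have "ln (real (r n)) \<le> (\<sigma> * ln (real n / real (r n)) + ln K) / (1 - \<sigma>)"
        using assms by (simp add: le_divide_eq mult.commute)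
      then show "ln (real (r n)) \<le> \<sigma> / (1 - \<sigma>) * ln (real n / real (r n)) + ln K / (1 - \<sigma>)"
        by (simp add: add_divide_distrib)
    qed
  qed
  show "eventually (\<lambda>n. 1 \<le> r n \<longrightarrow> \<Lambda>0 \<le> ln (real n / real (r n))) sequentially"
    using ln_r eventually_ge_ln_nat[of "(\<Lambda>0 + ln K) / (1 - \<sigma>)"]
  proof eventually_elim
    case (elim n)
    show ?case
    proof
      assume "1 \<le> r n"
      then have "(1 - \<sigma>) * ln (real n) - ln K \<le> ln (real n / real (r n))"
        using elim by (simp add: ln_div algebra_simps)
      moreover have "\<Lambda>0 + ln K \<le> (1 - \<sigma>) * ln (real n)" using elim assms by (simp add: field_simps)
      ultimately show "\<Lambda>0 \<le> ln (real n / real (r n))" by linarith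
    qed
  qed
qed

lemma log_ratio_bounds_of_powr_exponent:
  fixes r :: "nat \<Rightarrow> nat" and f :: "nat \<Rightarrow> real"
  assumes "f \<longlonglongrightarrow> 0" and r_eq: "eventually (\<lambda>n. real (r n) = real n powr f n) sequentially"
  shows "0 < \<tau> \<Longrightarrow> eventually (\<lambda>n. ln (real (r n)) \<le> \<tau> * ln (real n / real (r n))) sequentially"
    and "eventually (\<lambda>n. \<Lambda>0 \<le> ln (real n / real (r n))) sequentially"
proof -
  have ln_eq: "eventually (\<lambda>n. ln (real (r n)) = f n * ln (real n)
                 \<and> ln (real n / real (r n)) = (1 - f n) * ln (real n) \<and> 0 \<le> ln (real n)) sequentially"
    using r_eq eventually_gt_at_top[of 0]
    by eventually_elim (simp add: ln_div ln_powr algebra_simps)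
  show "eventually (\<lambda>n. ln (real (r n)) \<le> \<tau> * ln (real n / real (r n))) sequentially" if "0 < \<tau>"
  proof -
    have "eventually (\<lambda>n. f n < \<tau> / (1 + \<tau>)) sequentially"
      using \<open>f \<longlonglongrightarrow> 0\<close> by (rule order_tendstoD) (use that in simp)
    with ln_eq show ?thesis
    proof eventually_elim
      case (elim n)
      then have "f n * (1 + \<tau>) \<le> \<tau>" using that by (simp add: field_simps)
      then have "f n * ln (real n) \<le> \<tau> * ((1 - f n) * ln (real n))"
        using elim mult_right_mono[of "f n * (1 + \<tau>)" \<tau> "ln (real n)"] by (simp add: algebra_simps)
      then show ?case using elim by simp
    qed
  qed
  have "eventually (\<lambda>n. f n < 1/2) sequentially"
    using \<open>f \<longlonglongrightarrow> 0\<close> by (rule order_tendstoD) simp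
  with ln_eq eventually_ge_ln_nat[of "2 * \<Lambda>0"]
  show "eventually (\<lambda>n. \<Lambda>0 \<le> ln (real n / real (r n))) sequentially"
  proof eventually_elim
    case (elim n)
    then have "ln (real n) / 2 \<le> (1 - f n) * ln (real n)"
      using mult_right_mono[of "1/2" "1 - f n" "ln (real n)"] by simp
    then show ?case using elim by simp
  qed
qed

lemma eventually_a_term_ge_poly_size:
  fixes p :: "nat \<Rightarrow> nat \<Rightarrow> nat \<Rightarrow> real" and r :: "nat \<Rightarrow> nat" and rho :: "nat \<Rightarrow> nat set \<Rightarrow> real"
    and eps \<delta> M :: real and \<gamma> :: "nat \<Rightarrow> real"
  assumes eps: "0 < eps" "eps < 1"
    and rho_gt1: "\<And>n C. C \<subseteq> {1..n} \<Longrightarrow> card C = r n \<Longrightarrow> 1 < rho n C"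
    and cond: "eventually (\<lambda>n. \<forall>C D. C \<subseteq> {1..n} \<and> card C = r n \<and> D \<subseteq> C \<and> D \<noteq> {} \<longrightarrow>
                  E0e (p n) D * hfun (rho n C - 1) / (real (card D) * ln (real n / real (card D))) \<le> 1 - eps)
               sequentially"
    and \<delta>: "0 < \<delta>" "\<delta> < 1/2"
    and size: "(\<lambda>n. real (r n)) \<in> O(\<lambda>n. real n powr (1/2 - \<delta>))"
    and \<gamma>: "\<gamma> \<longlonglongrightarrow> 0"
    and ratio: "eventually (\<lambda>n. \<forall>C D. C \<subseteq> {1..n} \<and> card C = r n \<and> D \<subseteq> C \<and>
                  real (card D) < real (r n) / (real n / real (r n)) powr \<gamma> n
                \<longrightarrow> real (card D) * pbar (p n) D / (real (card C) * pbar (p n) C) \<le> \<delta>) sequentially"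
    and pbar_C: "\<forall>\<eta>>0. eventually (\<lambda>n. \<forall>C. C \<subseteq> {1..n} \<and> card C = r n \<longrightarrow>
                  0 < pbar (p n) C \<and> 1 / pbar (p n) C \<le> \<eta> * (real (r n) / ln (real n / real (r n))))
                sequentially"
  shows "eventually (\<lambda>n. \<forall>C D. C \<subseteq> {1..n} \<and> card C = r n \<and> D \<in> EC eps (p n) n (r n) (rho n C) C
           \<longrightarrow> M \<le> a_term eps (p n) n (r n) (rho n C) D) sequentially"
proof -
  obtain K where "0 < K" and size': "eventually (\<lambda>n. real (r n) \<le> K * real n powr (1/2 - \<delta>)) sequentially"
    using size by (elim landau_o.bigE) (auto elim: eventually_mono)
  define \<sigma> \<theta> K1 \<kappa> where "\<sigma> = 1/2 - \<delta>" and "\<theta> = \<sigma> / (1 - \<sigma>)" and "K1 = ln K / (1 - \<sigma>)"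
    and "\<kappa> = (1 - eps) * eps^4 / (4 * (1 + eps))"
  have "\<sigma> < 1" using \<delta> by (simp add: \<sigma>_def)
  have \<theta>: "0 < \<theta>" "\<theta> \<le> 1" "1 - \<theta> = 2 * \<delta> * (1 + \<theta>)"
    using \<delta> by (auto simp: \<theta>_def \<sigma>_def field_simps)
  have "0 < \<kappa>" using eps by (simp add: \<kappa>_def)
  obtain \<Lambda>0 where \<Lambda>0: "\<And>x. \<Lambda>0 \<le> x \<Longrightarrow> 1 \<le> x \<and> 0 + ln x \<le> 1/4 * x \<and> 10 * M / \<kappa> \<le> x \<and> K1 + ln x \<le> \<delta> * \<theta> * x"
  proof -
    have "eventually (\<lambda>x. 1 \<le> x \<and> 0 + ln x \<le> 1/4 * x \<and> 10 * M / \<kappa> \<le> x \<and> K1 + ln x \<le> \<delta> * \<theta> * x) at_top"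
      using \<delta> \<theta> by (intro eventually_conj eventually_ge_at_top eventually_ln_add_le_linear) auto
    then show thesis using that by (auto simp: eventually_at_top_linorder)
  qed
  have "0 < min (1/8) (\<kappa>/10)" "0 < hfun (\<theta>/2) / 4"
    using \<open>0 < \<kappa>\<close> hfun_shift_strict_mono[of 1 "1 + \<theta>/2"] \<theta> by (simp_all add: hfun_def)
  \<comment> \<open>This choice of \<open>\<eta>\<close> in (iii) forces \<open>\<rho>\<^sub>C \<le> 1 + \<theta>/2\<close>, which leaves the margin
    \<open>\<delta> \<theta> \<Lambda>\<close> needed to exclude the small subsets from \<open>E\<^sub>C\<close>.\<close>
  show ?thesis
    using log_ratio_bounds_of_powr_bound(1)[OF \<open>0 < K\<close> \<open>\<sigma> < 1\<close> size'[folded \<sigma>_def]]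
      log_ratio_bounds_of_powr_bound(2)[OF \<open>0 < K\<close> \<open>\<sigma> < 1\<close> size'[folded \<sigma>_def], of \<Lambda>0]
      order_tendstoD(2)[OF \<gamma> \<open>0 < min (1/8) (\<kappa>/10)\<close>] ratio
      pbar_C[rule_format, OF \<open>0 < hfun (\<theta>/2) / 4\<close>] cond
  proof eventually_elim
    case (elim n)
    show ?case
    proof (intro allI impI)
      fix C D assume "C \<subseteq> {1..n} \<and> card C = r n \<and> D \<in> EC eps (p n) n (r n) (rho n C) C"
      then have C: "C \<subseteq> {1..n}" "card C = r n" and D: "D \<in> EC eps (p n) n (r n) (rho n C) C" by auto
      have "finite C" using C(1) finite_subset by blast
      have pC: "0 < pbar (p n) C"
        "1 / pbar (p n) C \<le> hfun (\<theta>/2) / 4 * (real (r n) / ln (real n / real (r n)))"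
        using elim(5) C by blast+
      have "1 \<le> r n" using card_ge_2_if_pbar_pos[OF pC(1)] C(2) by simp
      then have \<Lambda>n: "\<Lambda>0 \<le> ln (real n / real (r n))"
        and log_size: "ln (real (r n)) \<le> \<theta> * ln (real n / real (r n)) + K1"
        using elim(1,2) by (simp_all add: \<theta>_def K1_def)
      from \<Lambda>0[OF \<Lambda>n] have \<Lambda>: "1 \<le> ln (real n / real (r n))"
        "ln (ln (real n / real (r n))) \<le> ln (real n / real (r n)) / 4"
        "10 * M / \<kappa> \<le> ln (real n / real (r n))"
        "K1 + ln (ln (real n / real (r n))) \<le> \<delta> * \<theta> * ln (real n / real (r n))" by auto
      have M: "M \<le> \<kappa> * ln (real n / real (r n)) / 10"
        using \<Lambda>(3) \<open>0 < \<kappa>\<close> by (simp add: divide_le_eq mult.commute)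
      have \<gamma>n: "\<gamma> n \<le> 1/8" "\<gamma> n \<le> \<kappa> / 10" using elim(3) by auto
      have "D \<subseteq> C" using EC_card_bounds(1)[OF D \<open>finite C\<close> C(2)] .
      have ratio_n: "real (card D) < real (r n) / (real n / real (r n)) powr \<gamma> n
          \<Longrightarrow> real (card D) * pbar (p n) D / (real (card C) * pbar (p n) C) \<le> \<delta>"
        using elim(4) C \<open>D \<subseteq> C\<close> by blast
      have cond_n: "\<And>D'. D' \<subseteq> C \<Longrightarrow> D' \<noteq> {} \<Longrightarrow>
          E0e (p n) D' * hfun (rho n C - 1) / (real (card D') * ln (real n / real (card D'))) \<le> 1 - eps"
        using elim(6) C by blast
      show "M \<le> a_term eps (p n) n (r n) (rho n C) D"
        by (rule a_term_ge_poly_size_instance[OF eps rho_gt1[OF C] \<open>0 < \<delta>\<close> \<theta> \<open>finite C\<close> C(2) D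
              \<Lambda>(1,2) M[unfolded \<kappa>_def] \<Lambda>(4) log_size \<gamma>n[unfolded \<kappa>_def] pC ratio_n cond_n])
    qed
  qed
qed

lemma eventually_a_term_ge_subpoly_size:
  fixes p :: "nat \<Rightarrow> nat \<Rightarrow> nat \<Rightarrow> real" and r :: "nat \<Rightarrow> nat" and rho :: "nat \<Rightarrow> nat set \<Rightarrow> real"
    and eps M :: real and f :: "nat \<Rightarrow> real"
  assumes eps: "0 < eps" "eps < 1"
    and rho_gt1: "\<And>n C. C \<subseteq> {1..n} \<Longrightarrow> card C = r n \<Longrightarrow> 1 < rho n C"
    and A2: "\<And>\<eta>. \<eta> > 0 \<Longrightarrow> eventually (\<lambda>n. \<forall>C i j. C \<subseteq> {1..n} \<and> card C = r n \<and> i \<in> C \<and> j \<in> C \<and> i \<noteq> j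
                  \<longrightarrow> (rho n C)^2 * p n i j \<le> \<eta>) sequentially"
    and cond: "eventually (\<lambda>n. \<forall>C D. C \<subseteq> {1..n} \<and> card C = r n \<and> D \<subseteq> C \<and> D \<noteq> {} \<longrightarrow>
                  E0e (p n) D * hfun (rho n C - 1) / (real (card D) * ln (real n / real (card D))) \<le> 1 - eps)
               sequentially"
    and f: "f \<longlonglongrightarrow> 0" and size: "eventually (\<lambda>n. real (r n) = real n powr f n) sequentially"
    and pbar_C: "\<forall>\<eta>>0. eventually (\<lambda>n. \<forall>C. C \<subseteq> {1..n} \<and> card C = r n \<longrightarrow>
                  0 < pbar (p n) C \<and> ln (1 / pbar (p n) C) \<le> \<eta> * (ln (real n / real (r n)) / ln (real (r n))))
                sequentially"
  shows "eventually (\<lambda>n. \<forall>C D. C \<subseteq> {1..n} \<and> card C = r n \<and> D \<in> EC eps (p n) n (r n) (rho n C) C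
           \<longrightarrow> M \<le> a_term eps (p n) n (r n) (rho n C) D) sequentially"
proof -
  \<comment> \<open>\<open>\<eta>\<close> is chosen so that \<open>(\<kappa>/(2\<eta>) - 1) log r \<ge> |M|\<close> as soon as \<open>r \<ge> 2\<close>.\<close>
  define \<kappa> B where "\<kappa> = (1 - eps) * eps^4 / (4 * (1 + eps))" and "B = 1 + \<bar>M\<bar> / ln 2"
  define \<eta> where "\<eta> = \<kappa> / (2 * B)"
  have "0 < \<kappa>" using eps by (simp add: \<kappa>_def)
  then have "0 < min (1/8) (\<kappa>/12)" by simp
  have "1 \<le> B" by (simp add: B_def)
  have "\<kappa> / (2 * \<eta>) = B" using \<open>0 < \<kappa>\<close> \<open>1 \<le> B\<close> by (simp add: \<eta>_def)
  then have "\<kappa> / (2 * \<eta>) - 1 = \<bar>M\<bar> / ln 2" by (simp add: B_def)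
  then have \<eta>: "0 < \<eta>" "2 * \<eta> \<le> \<kappa>" "M \<le> (\<kappa> / (2 * \<eta>) - 1) * ln 2"
    using \<open>0 < \<kappa>\<close> \<open>1 \<le> B\<close> by (auto simp: \<eta>_def divide_le_eq)
  obtain \<Lambda>0 where \<Lambda>0: "\<And>x. \<Lambda>0 \<le> x \<Longrightarrow> 1 \<le> x \<and> 0 + ln x \<le> 1/4 * x \<and> 12 * M / \<kappa> \<le> x"
  proof -
    have "eventually (\<lambda>x. 1 \<le> x \<and> 0 + ln x \<le> 1/4 * x \<and> 12 * M / \<kappa> \<le> x) at_top"
      by (intro eventually_conj eventually_ge_at_top eventually_ln_add_le_linear) auto
    then show thesis using that by (auto simp: eventually_at_top_linorder)
  qed
  show ?thesis
    using log_ratio_bounds_of_powr_exponent(1)[OF f size \<open>0 < min (1/8) (\<kappa>/12)\<close>]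
      log_ratio_bounds_of_powr_exponent(2)[OF f size, of \<Lambda>0]
      A2[OF zero_less_one] pbar_C[rule_format, OF \<open>0 < \<eta>\<close>] cond
  proof eventually_elim
    case (elim n)
    show ?case
    proof (intro allI impI)
      fix C D assume "C \<subseteq> {1..n} \<and> card C = r n \<and> D \<in> EC eps (p n) n (r n) (rho n C) C"
      then have C: "C \<subseteq> {1..n}" "card C = r n" and D: "D \<in> EC eps (p n) n (r n) (rho n C) C" by auto
      have "finite C" using C(1) finite_subset by blast
      have "D \<subseteq> C" "D \<noteq> {}" using EC_subset_nonempty[OF D] by auto
      have pC: "0 < pbar (p n) C"
        "ln (1 / pbar (p n) C) \<le> \<eta> * (ln (real n / real (r n)) / ln (real (r n)))"
        using elim(4) C by blast+
      from \<Lambda>0[OF elim(2)] have \<Lambda>: "1 \<le> ln (real n / real (r n))"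
        "ln (ln (real n / real (r n))) \<le> ln (real n / real (r n)) / 4"
        "12 * M / \<kappa> \<le> ln (real n / real (r n))" by auto
      have M: "M \<le> \<kappa> * ln (real n / real (r n)) / 12"
        using \<Lambda>(3) \<open>0 < \<kappa>\<close> by (simp add: divide_le_eq mult.commute)
      have "min (1/8) (\<kappa>/12) * ln (real n / real (r n)) \<le> 1/8 * ln (real n / real (r n))"
        "min (1/8) (\<kappa>/12) * ln (real n / real (r n)) \<le> \<kappa>/12 * ln (real n / real (r n))"
        using \<Lambda>(1) by (intro mult_right_mono; simp)+
      then have log_size: "ln (real (r n)) \<le> ln (real n / real (r n)) / 8"
        "ln (real (r n)) \<le> \<kappa> * ln (real n / real (r n)) / 12"
        using elim(1) by simp_all
      have edges: "\<And>i j. i \<in> C \<Longrightarrow> j \<in> C \<Longrightarrow> i \<noteq> j \<Longrightarrow> (rho n C)^2 * p n i j \<le> 1"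
        using elim(3) C by blast
      have cond_n: "E0e (p n) D * hfun (rho n C - 1) / (real (card D) * ln (real n / real (card D))) \<le> 1 - eps"
        using elim(5) C \<open>D \<subseteq> C\<close> \<open>D \<noteq> {}\<close> by blast
      show "M \<le> a_term eps (p n) n (r n) (rho n C) D"
        by (rule a_term_ge_subpoly_size_instance[OF eps rho_gt1[OF C] \<open>finite C\<close> C(2) D
              \<Lambda>(1,2) M[unfolded \<kappa>_def] log_size[unfolded \<kappa>_def] \<eta>[unfolded \<kappa>_def] pC edges cond_n])
    qed
  qed
qed

theorem lemma4:
  fixes p :: "nat \<Rightarrow> nat \<Rightarrow> nat \<Rightarrow> real"
    and r :: "nat \<Rightarrow> nat"
    and rho :: "nat \<Rightarrow> nat set \<Rightarrow> real"
    and eps :: real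
  assumes eps: "0 < eps" "eps < 1"
    and p_sym: "\<And>n i j. i \<in> {1..n} \<Longrightarrow> j \<in> {1..n} \<Longrightarrow> i \<noteq> j \<Longrightarrow> p n i j = p n j i"
    and p_range: "\<And>n i j. i \<in> {1..n} \<Longrightarrow> j \<in> {1..n} \<Longrightarrow> i \<noteq> j \<Longrightarrow> 0 \<le> p n i j \<and> p n i j \<le> 1"
    and rho_gt1: "\<And>n C. C \<subseteq> {1..n} \<Longrightarrow> card C = r n \<Longrightarrow> rho n C > 1"
    and rho_p_le1: "\<And>n C i j. C \<subseteq> {1..n} \<Longrightarrow> card C = r n \<Longrightarrow> i \<in> C \<Longrightarrow> j \<in> C \<Longrightarrow> i \<noteq> j
                      \<Longrightarrow> rho n C * p n i j \<le> 1"
    \<comment> \<open>Assumption 2\<close>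
    and A2: "\<And>\<eta>. \<eta> > 0 \<Longrightarrow> eventually (\<lambda>n. \<forall>C i j. C \<subseteq> {1..n} \<and> card C = r n \<and> i \<in> C \<and> j \<in> C \<and> i \<noteq> j
                  \<longrightarrow> (rho n C)^2 * p n i j \<le> \<eta>) sequentially"
    \<comment> \<open>Assumption 1.1 or Assumption 1.2\<close>
    and A1: "(\<exists>\<delta>::real. 0 < \<delta> \<and> \<delta> < 1/2
               \<and> (\<lambda>n. real (r n)) \<in> O(\<lambda>n. real n powr (1/2 - \<delta>))
               \<and> (\<exists>\<gamma>::nat \<Rightarrow> real. (\<forall>n. 0 < \<gamma> n) \<and> \<gamma> \<longlonglongrightarrow> 0 \<and>
                    eventually (\<lambda>n. \<forall>C D. C \<subseteq> {1..n} \<and> card C = r n \<and> D \<subseteq> C \<and>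
                        real (card D) < real (r n) / (real n / real (r n)) powr \<gamma> n
                      \<longrightarrow> real (card D) * pbar (p n) D / (real (card C) * pbar (p n) C) \<le> \<delta>) sequentially)
               \<and> (\<forall>\<eta>>0. eventually (\<lambda>n. \<forall>C. C \<subseteq> {1..n} \<and> card C = r n \<longrightarrow>
                        pbar (p n) C > 0 \<and>
                        1 / pbar (p n) C \<le> \<eta> * (real (r n) / ln (real n / real (r n)))) sequentially))
           \<or> ((\<exists>f::nat \<Rightarrow> real. f \<longlonglongrightarrow> 0 \<and> eventually (\<lambda>n. real (r n) = real n powr f n) sequentially)
               \<and> (\<forall>\<eta>>0. eventually (\<lambda>n. \<forall>C. C \<subseteq> {1..n} \<and> card C = r n \<longrightarrow>
                        pbar (p n) C > 0 \<and>
                        ln (1 / pbar (p n) C) \<le> \<eta> * (ln (real n / real (r n)) / ln (real (r n)))) sequentially))"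
    \<comment> \<open>the additional condition\<close>
    and cond: "eventually (\<lambda>n. \<forall>C D. C \<subseteq> {1..n} \<and> card C = r n \<and> D \<subseteq> C \<and> D \<noteq> {} \<longrightarrow>
                  E0e (p n) D * hfun (rho n C - 1) / (real (card D) * ln (real n / real (card D))) \<le> 1 - eps)
               sequentially"
  shows "\<forall>M::real. eventually (\<lambda>n. \<forall>C D. C \<subseteq> {1..n} \<and> card C = r n \<and> D \<in> EC eps (p n) n (r n) (rho n C) C \<longrightarrow>
            M \<le> (1 - eps) * (rho n C * E0e (p n) D / real (card D)) * hfun (cD eps (p n) n D / rho n C - 1)
                 - ln (real (r n) / real (card D))) sequentially"
  unfolding a_term_def[symmetric]
proof (intro allI)
  fix M :: real
  from A1 show "eventually (\<lambda>n. \<forall>C D. C \<subseteq> {1..n} \<and> card C = r n \<and> D \<in> EC eps (p n) n (r n) (rho n C) C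
      \<longrightarrow> M \<le> a_term eps (p n) n (r n) (rho n C) D) sequentially"
    by (elim disjE exE conjE)
      (rule eventually_a_term_ge_poly_size[OF eps rho_gt1 cond]
        eventually_a_term_ge_subpoly_size[OF eps rho_gt1 A2 cond], assumption+)+
qed

end
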